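(* Let $P$ be a continuous $L$-ordered set. Then (1) $({\rm pt}_L\sigma_L(P),{\rm sub}_{\sigma_L(P)})$ is a continuous $L$-dcpo; (2) the Scott $L$-topology of $({\rm pt}_L\sigma_L(P),{\rm sub}_{\sigma_L(P)})$ coincides with the spectral $L$-topology $\mathcal O{\rm pt}_L\sigma_L(P)$, i.e., $\sigma_L({\rm pt}_L\sigma_L(P))=\mathcal O{\rm pt}_L\sigma_L(P)$.
   Context: $L$ is a frame with implication $\to$. $L$-subsets: maps to $L$; ${\rm sub}_X(A,B)=\bigwedge_xA(x)\to B(x)$. $L$-order $e$ on $P$: $e(x,x)=1$, $e(x,y)\wedge e(y,z)\le e(x,z)$, $e(x,y)\wedge e(y,x)=1\Rightarrow x=y$. ${\downarrow}y(x)=e(x,y)$; $\sqcup A=x$ iff $e(x,y)={\rm sub}_P(A,{\downarrow}y)$ for all $y$; directed: $\bigvee D=1$ and $D(x)\wedge D(y)\le\bigvee_zD(z)\wedge e(x,z)\wedge e(y,z)$; ideal: directed lower set; $L$-dcpo: every directed $L$-subset has a supremum; ${\Downarrow}x(y)=\bigwedge\{e(x,\sqcup I)\to I(y):I\text{ ideal with a supremum}\}$; continuous $L$-ordered set: each ${\Downarrow}x$ directed with supremum $x$; continuous $L$-dcpo: continuous $L$-ordered set that is an $L$-dcpo. Scott $L$-topology $\sigma_L(P)$: upper sets $A$ ($A(x)\wedge e(x,y)\le A(y)$) with $A(\sqcup D)=\bigvee_xA(x)\wedge D(x)$ for every directed $D$ having a supremum. ${\rm pt}_L\sigma_L(P)$: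 the set of maps $p:\sigma_L(P)\to L$ preserving binary meets and arbitrary joins with $p(\lambda_P)=\lambda$ for constants; $L$-ordered by ${\rm sub}_{\sigma_L(P)}(p,q)=\bigwedge_{A\in\sigma_L(P)}p(A)\to q(A)$; its spectral $L$-topology $\mathcal O{\rm pt}_L\sigma_L(P)=\{\phi(A):A\in\sigma_L(P)\}$ with $\phi(A)(p)=p(A)$. *)

theory Defs
  imports Main
begin

definition frame :: "'l::complete_lattice itself \<Rightarrow> bool" where
  "frame _ \<longleftrightarrow> (\<forall>(a::'l) S. inf a (Sup S) = Sup ((inf a) ` S))"

definition limp :: "'l::complete_lattice \<Rightarrow> 'l \<Rightarrow> 'l" where
  "limp a b = Sup {c. inf c a \<le> b}"

text \<open>L-subsets of a carrier X: maps X \<rightarrow> L, represented as total functions that are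
bottom outside X (canonical representatives).\<close>

definition Lsubset :: "'a set \<Rightarrow> ('a \<Rightarrow> 'l::complete_lattice) \<Rightarrow> bool" where
  "Lsubset X A \<longleftrightarrow> (\<forall>x. x \<notin> X \<longrightarrow> A x = bot)"

definition Lsub :: "'a set \<Rightarrow> ('a \<Rightarrow> 'l::complete_lattice) \<Rightarrow> ('a \<Rightarrow> 'l) \<Rightarrow> 'l" where
  "Lsub X A B = (INF x\<in>X. limp (A x) (B x))"

definition Lorder :: "'a set \<Rightarrow> ('a \<Rightarrow> 'a \<Rightarrow> 'l::complete_lattice) \<Rightarrow> bool" where
  "Lorder X e \<longleftrightarrow>
     (\<forall>x\<in>X. e x x = top) \<and>
     (\<forall>x\<in>X. \<forall>y\<in>X. \<forall>z\<in>X. inf (e x y) (e y z) \<le> e x z) \<and>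
     (\<forall>x\<in>X. \<forall>y\<in>X. inf (e x y) (e y x) = top \<longrightarrow> x = y)"

definition ldown :: "'a set \<Rightarrow> ('a \<Rightarrow> 'a \<Rightarrow> 'l::complete_lattice) \<Rightarrow> 'a \<Rightarrow> 'a \<Rightarrow> 'l" where
  "ldown X e y = (\<lambda>x. if x \<in> X then e x y else bot)"

definition is_Lsup :: "'a set \<Rightarrow> ('a \<Rightarrow> 'a \<Rightarrow> 'l::complete_lattice) \<Rightarrow> ('a \<Rightarrow> 'l) \<Rightarrow> 'a \<Rightarrow> bool" where
  "is_Lsup X e A s \<longleftrightarrow> s \<in> X \<and> (\<forall>y\<in>X. e s y = Lsub X A (ldown X e y))"

definition Ldirected :: "'a set \<Rightarrow> ('a \<Rightarrow> 'a \<Rightarrow> 'l::complete_lattice) \<Rightarrow> ('a \<Rightarrow> 'l) \<Rightarrow> bool" where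
  "Ldirected X e D \<longleftrightarrow>
     (SUP x\<in>X. D x) = top \<and>
     (\<forall>x\<in>X. \<forall>y\<in>X. inf (D x) (D y) \<le> (SUP z\<in>X. inf (D z) (inf (e x z) (e y z))))"

definition Llower :: "'a set \<Rightarrow> ('a \<Rightarrow> 'a \<Rightarrow> 'l::complete_lattice) \<Rightarrow> ('a \<Rightarrow> 'l) \<Rightarrow> bool" where
  "Llower X e A \<longleftrightarrow> (\<forall>x\<in>X. \<forall>y\<in>X. inf (A x) (e y x) \<le> A y)"

definition Lupper :: "'a set \<Rightarrow> ('a \<Rightarrow> 'a \<Rightarrow> 'l::complete_lattice) \<Rightarrow> ('a \<Rightarrow> 'l) \<Rightarrow> bool" where
  "Lupper X e A \<longleftrightarrow> (\<forall>x\<in>X. \<forall>y\<in>X. inf (A x) (e x y) \<le> A y)"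

definition Lideal :: "'a set \<Rightarrow> ('a \<Rightarrow> 'a \<Rightarrow> 'l::complete_lattice) \<Rightarrow> ('a \<Rightarrow> 'l) \<Rightarrow> bool" where
  "Lideal X e I \<longleftrightarrow> Lsubset X I \<and> Ldirected X e I \<and> Llower X e I"

definition Ldcpo :: "'a set \<Rightarrow> ('a \<Rightarrow> 'a \<Rightarrow> 'l::complete_lattice) \<Rightarrow> bool" where
  "Ldcpo X e \<longleftrightarrow> Lorder X e \<and>
     (\<forall>D. Lsubset X D \<and> Ldirected X e D \<longrightarrow> (\<exists>s. is_Lsup X e D s))"

definition wayb :: "'a set \<Rightarrow> ('a \<Rightarrow> 'a \<Rightarrow> 'l::complete_lattice) \<Rightarrow> 'a \<Rightarrow> 'a \<Rightarrow> 'l" where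
  "wayb X e x = (\<lambda>y. if y \<in> X then
      Inf {limp (e x s) (I y) | I s. Lideal X e I \<and> is_Lsup X e I s} else bot)"

definition cont_Lordered :: "'a set \<Rightarrow> ('a \<Rightarrow> 'a \<Rightarrow> 'l::complete_lattice) \<Rightarrow> bool" where
  "cont_Lordered X e \<longleftrightarrow> Lorder X e \<and>
     (\<forall>x\<in>X. Ldirected X e (wayb X e x) \<and> is_Lsup X e (wayb X e x) x)"

definition cont_Ldcpo :: "'a set \<Rightarrow> ('a \<Rightarrow> 'a \<Rightarrow> 'l::complete_lattice) \<Rightarrow> bool" where
  "cont_Ldcpo X e \<longleftrightarrow> cont_Lordered X e \<and> Ldcpo X e"

definition scott :: "'a set \<Rightarrow> ('a \<Rightarrow> 'a \<Rightarrow> 'l::complete_lattice) \<Rightarrow> ('a \<Rightarrow> 'l) set" where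
  "scott X e = {A. Lsubset X A \<and> Lupper X e A \<and>
     (\<forall>D s. Lsubset X D \<and> Ldirected X e D \<and> is_Lsup X e D s \<longrightarrow>
        A s = (SUP x\<in>X. inf (A x) (D x)))}"

definition lconst :: "'a set \<Rightarrow> 'l::complete_lattice \<Rightarrow> 'a \<Rightarrow> 'l" where
  "lconst X c = (\<lambda>x. if x \<in> X then c else bot)"

text \<open>Points of \<sigma>_L(P): maps \<sigma>_L(P) \<rightarrow> L (bottom outside \<sigma>_L(P)) preserving binary
meets, arbitrary joins and constants.\<close>
definition pts :: "'a set \<Rightarrow> ('a \<Rightarrow> 'a \<Rightarrow> 'l::complete_lattice) \<Rightarrow> (('a \<Rightarrow> 'l) \<Rightarrow> 'l) set" where
  "pts X e = {p. (\<forall>A. A \<notin> scott X e \<longrightarrow> p A = bot) \<and>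
     (\<forall>A\<in>scott X e. \<forall>B\<in>scott X e. p (inf A B) = inf (p A) (p B)) \<and>
     (\<forall>\<A>. \<A> \<subseteq> scott X e \<longrightarrow> p (Sup \<A>) = (SUP A\<in>\<A>. p A)) \<and>
     (\<forall>c. p (lconst X c) = c)}"

definition pt_order :: "'a set \<Rightarrow> ('a \<Rightarrow> 'a \<Rightarrow> 'l::complete_lattice) \<Rightarrow>
    (('a \<Rightarrow> 'l) \<Rightarrow> 'l) \<Rightarrow> (('a \<Rightarrow> 'l) \<Rightarrow> 'l) \<Rightarrow> 'l" where
  "pt_order X e p q = Lsub (scott X e) p q"

definition phi :: "'a set \<Rightarrow> ('a \<Rightarrow> 'a \<Rightarrow> 'l::complete_lattice) \<Rightarrow> ('a \<Rightarrow> 'l) \<Rightarrow>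
    (('a \<Rightarrow> 'l) \<Rightarrow> 'l) \<Rightarrow> 'l" where
  "phi X e A = (\<lambda>p. if p \<in> pts X e then p A else bot)"

definition spectral :: "'a set \<Rightarrow> ('a \<Rightarrow> 'a \<Rightarrow> 'l::complete_lattice) \<Rightarrow>
    ((('a \<Rightarrow> 'l) \<Rightarrow> 'l) \<Rightarrow> 'l) set" where
  "spectral X e = phi X e ` scott X e"

end

theory Submission
  imports Defs
begin

(* In a continuous L-ordered set the way-below relation interpolates, so every way-above set
   wayup y (x |-> wayb x y) is Scott open and every Scott open A is the join of the Scott opens
   A(y) inf wayup y. A point p is therefore determined by the family y |-> p (wayup y). Pushed
   forward along x |-> (A |-> A x), this family becomes a directed family of points that lies way
   below p and whose join is p, directed joins of points being computed pointwise; hence the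
   points form a continuous L-dcpo. Pointwise joins also make every phi A Scott open. Conversely,
   a Scott open set U of points is phi of its pull-back x |-> U (A |-> A x), which is Scott open
   because x |-> (A |-> A x) preserves directed joins. *)

definition lower_closure ::
    "'a set \<Rightarrow> ('a \<Rightarrow> 'a \<Rightarrow> 'l::complete_lattice) \<Rightarrow> ('a \<Rightarrow> 'l) \<Rightarrow> 'a \<Rightarrow> 'l" where
  "lower_closure X E D = (\<lambda>y. if y \<in> X then (SUP x\<in>X. inf (D x) (E y x)) else bot)"

definition wayup ::
    "'a set \<Rightarrow> ('a \<Rightarrow> 'a \<Rightarrow> 'l::complete_lattice) \<Rightarrow> 'a \<Rightarrow> 'a \<Rightarrow> 'l" where
  "wayup X E y = (\<lambda>x. if x \<in> X then wayb X E x y else bot)"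

definition point_of ::
    "'a set \<Rightarrow> ('a \<Rightarrow> 'a \<Rightarrow> 'l::complete_lattice) \<Rightarrow> 'a \<Rightarrow> ('a \<Rightarrow> 'l) \<Rightarrow> 'l" where
  "point_of P e x = (\<lambda>A. if A \<in> scott P e then A x else bot)"

definition pt_join :: "'a set \<Rightarrow> ('a \<Rightarrow> 'a \<Rightarrow> 'l::complete_lattice) \<Rightarrow>
    ((('a \<Rightarrow> 'l) \<Rightarrow> 'l) \<Rightarrow> 'l) \<Rightarrow> ('a \<Rightarrow> 'l) \<Rightarrow> 'l" where
  "pt_join P e D = (\<lambda>A. if A \<in> scott P e then (SUP q\<in>pts P e. inf (D q) (q A)) else bot)"

definition Limage ::
    "('a \<Rightarrow> 'b) \<Rightarrow> 'a set \<Rightarrow> ('a \<Rightarrow> 'l::complete_lattice) \<Rightarrow> 'b \<Rightarrow> 'l" where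
  "Limage f X D y = (SUP x\<in>{x\<in>X. f x = y}. D x)"

definition pt_approx :: "'a set \<Rightarrow> ('a \<Rightarrow> 'a \<Rightarrow> 'l::complete_lattice) \<Rightarrow>
    (('a \<Rightarrow> 'l) \<Rightarrow> 'l) \<Rightarrow> (('a \<Rightarrow> 'l) \<Rightarrow> 'l) \<Rightarrow> 'l" where
  "pt_approx P e p = Limage (point_of P e) P (\<lambda>y. p (wayup P e y))"

definition wayb_comp ::
    "'a set \<Rightarrow> ('a \<Rightarrow> 'a \<Rightarrow> 'l::complete_lattice) \<Rightarrow> 'a \<Rightarrow> 'a \<Rightarrow> 'l" where
  "wayb_comp X E x y = (if y \<in> X then (SUP z\<in>X. inf (wayb X E x z) (wayb X E z y)) else bot)"

lemma Lorder_refl: "Lorder X E \<Longrightarrow> x \<in> X \<Longrightarrow> E x x = top"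
  by (simp add: Lorder_def)

lemma Lorder_trans:
  "Lorder X E \<Longrightarrow> x \<in> X \<Longrightarrow> y \<in> X \<Longrightarrow> z \<in> X \<Longrightarrow> inf (E x y) (E y z) \<le> E x z"
  by (simp add: Lorder_def)

lemma Lorder_antisym:
  "Lorder X E \<Longrightarrow> x \<in> X \<Longrightarrow> y \<in> X \<Longrightarrow> E x y = top \<Longrightarrow> E y x = top \<Longrightarrow> x = y"
  by (simp add: Lorder_def)

lemma Ldirected_SUP_eq_top: "Ldirected X E D \<Longrightarrow> (SUP x\<in>X. D x) = top"
  by (simp add: Ldirected_def)

lemma Ldirected_inf_le:
  "Ldirected X E D \<Longrightarrow> x \<in> X \<Longrightarrow> y \<in> X \<Longrightarrow>
    inf (D x) (D y) \<le> (SUP z\<in>X. inf (D z) (inf (E x z) (E y z)))"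
  by (simp add: Ldirected_def)

lemma is_Lsup_mem: "is_Lsup X E D s \<Longrightarrow> s \<in> X"
  by (simp add: is_Lsup_def)

lemma is_Lsup_eq: "is_Lsup X E D s \<Longrightarrow> y \<in> X \<Longrightarrow> E s y = Lsub X D (ldown X E y)"
  by (simp add: is_Lsup_def)

lemma Lideal_Llower: "Lideal X E I \<Longrightarrow> x \<in> X \<Longrightarrow> y \<in> X \<Longrightarrow> inf (I x) (E y x) \<le> I y"
  by (simp add: Lideal_def Llower_def)

lemma scottI:
  assumes "Lsubset X A" and "Lupper X E A"
    and "\<And>D s. Lsubset X D \<Longrightarrow> Ldirected X E D \<Longrightarrow> is_Lsup X E D s \<Longrightarrow>
           A s = (SUP x\<in>X. inf (A x) (D x))"
  shows "A \<in> scott X E"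
  using assms by (auto simp: scott_def)

lemma scott_eq_SUP:
  "A \<in> scott X E \<Longrightarrow> Lsubset X D \<Longrightarrow> Ldirected X E D \<Longrightarrow> is_Lsup X E D s \<Longrightarrow>
    A s = (SUP x\<in>X. inf (A x) (D x))"
  by (simp add: scott_def)

lemma scott_eq_bot: "A \<in> scott X E \<Longrightarrow> x \<notin> X \<Longrightarrow> A x = bot"
  by (simp add: scott_def Lsubset_def)

lemma scott_upper: "A \<in> scott X E \<Longrightarrow> x \<in> X \<Longrightarrow> y \<in> X \<Longrightarrow> inf (A x) (E x y) \<le> A y"
  by (simp add: scott_def Lupper_def)

lemma ptsI:
  assumes "\<And>A. A \<notin> scott P e \<Longrightarrow> p A = bot"
    and "\<And>A B. A \<in> scott P e \<Longrightarrow> B \<in> scott P e \<Longrightarrow> p (inf A B) = inf (p A) (p B)"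
    and "\<And>\<A>. \<A> \<subseteq> scott P e \<Longrightarrow> p (Sup \<A>) = (SUP A\<in>\<A>. p A)"
    and "\<And>c. p (lconst P c) = c"
  shows "p \<in> pts P e"
  using assms by (simp add: pts_def)

lemma
  assumes "p \<in> pts P e"
  shows pts_eq_bot: "A \<notin> scott P e \<Longrightarrow> p A = bot"
    and pts_inf: "A \<in> scott P e \<Longrightarrow> B \<in> scott P e \<Longrightarrow> p (inf A B) = inf (p A) (p B)"
    and pts_Sup: "\<A> \<subseteq> scott P e \<Longrightarrow> p (Sup \<A>) = (SUP A\<in>\<A>. p A)"
    and pts_lconst: "p (lconst P c) = c"
  using assms by (simp_all add: pts_def)

context
  assumes frame: "frame TYPE('l::complete_lattice)"
begin

section \<open>Frames\<close>

lemma inf_SUP_frame: "inf (a::'l) (SUP i\<in>I. f i) = (SUP i\<in>I. inf a (f i))"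
  using frame unfolding frame_def by (metis image_image)

lemma SUP_inf_frame: "inf (SUP i\<in>I. f i) (a::'l) = (SUP i\<in>I. inf (f i) a)"
  using inf_SUP_frame by (simp add: inf_commute)

lemma inf_SUP_leI: "(\<And>i. i \<in> I \<Longrightarrow> inf a (f i) \<le> c) \<Longrightarrow> inf (a::'l) (SUP i\<in>I. f i) \<le> c"
  by (simp add: inf_SUP_frame SUP_least)

lemma SUP_inf_leI: "(\<And>i. i \<in> I \<Longrightarrow> inf (f i) a \<le> c) \<Longrightarrow> inf (SUP i\<in>I. f i) (a::'l) \<le> c"
  by (simp add: SUP_inf_frame SUP_least)

lemma SUP_inf_SUP_leI:
  "(\<And>i j. i \<in> I \<Longrightarrow> j \<in> J \<Longrightarrow> inf (f i) (g j) \<le> c) \<Longrightarrow>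
    inf (SUP i\<in>I. f i) (SUP j\<in>J. g j) \<le> (c::'l)"
  by (intro SUP_inf_leI inf_SUP_leI)

lemma le_limp_iff: "(c::'l) \<le> limp a b \<longleftrightarrow> inf c a \<le> b"
proof
  assume "c \<le> limp a b"
  then have "inf c a \<le> inf a (Sup {c. inf c a \<le> b})"
    by (simp add: limp_def le_infI1 le_infI2)
  also have "\<dots> = (SUP d\<in>{c. inf c a \<le> b}. inf a d)"
    using frame by (simp add: frame_def)
  also have "\<dots> \<le> b"
    by (rule SUP_least) (simp add: inf_commute)
  finally show "inf c a \<le> b" .
qed (simp add: limp_def Sup_upper)

section \<open>\<open>L\<close>-ordered sets\<close>

lemma le_Lsub_iff: "(c::'l) \<le> Lsub X A B \<longleftrightarrow> (\<forall>x\<in>X. inf c (A x) \<le> B x)"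
  by (simp add: Lsub_def le_INF_iff le_limp_iff)

lemma Lsub_inf_le: "x \<in> X \<Longrightarrow> inf (Lsub X A B) (A x) \<le> (B x::'l)"
  using le_Lsub_iff[of "Lsub X A B" X A B] by simp

lemma Lsub_antimono: "(\<And>x. x \<in> X \<Longrightarrow> A x \<le> A' x) \<Longrightarrow> Lsub X A' B \<le> (Lsub X A B::'l)"
  unfolding le_Lsub_iff by (metis Lsub_inf_le inf_mono order_refl order_trans)

lemma is_Lsup_le:
  "is_Lsup X E D s \<Longrightarrow> x \<in> X \<Longrightarrow> y \<in> X \<Longrightarrow> inf (E s y) (D x) \<le> (E x y::'l)"
  using Lsub_inf_le[of x X D "ldown X E y"] by (simp add: is_Lsup_eq ldown_def)

lemma is_Lsup_upper:
  "Lorder X E \<Longrightarrow> is_Lsup X E D s \<Longrightarrow> x \<in> X \<Longrightarrow> D x \<le> (E x s::'l)"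
  using is_Lsup_le[of X E D s x s] by (simp add: is_Lsup_mem Lorder_refl)

lemma is_Lsup_least:
  "is_Lsup X E D s \<Longrightarrow> y \<in> X \<Longrightarrow> (\<And>x. x \<in> X \<Longrightarrow> inf c (D x) \<le> E x y) \<Longrightarrow> (c::'l) \<le> E s y"
  by (simp add: is_Lsup_eq le_Lsub_iff ldown_def)

lemma is_LsupI:
  assumes "s \<in> X"
    and "\<And>x y. x \<in> X \<Longrightarrow> y \<in> X \<Longrightarrow> inf (E s y) (D x) \<le> (E x y::'l)"
    and "\<And>y. y \<in> X \<Longrightarrow> Lsub X D (ldown X E y) \<le> E s y"
  shows "is_Lsup X E D s"
  unfolding is_Lsup_def
proof (intro conjI ballI antisym)
  fix y assume "y \<in> X"
  then show "E s y \<le> Lsub X D (ldown X E y)" using assms(2) by (simp add: le_Lsub_iff ldown_def)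
qed (use assms in simp_all)

lemma is_Lsup_unique:
  assumes O: "Lorder X (E::'a \<Rightarrow> 'a \<Rightarrow> 'l)" and S: "is_Lsup X E D s" and T: "is_Lsup X E D t"
  shows "s = t"
proof -
  have "s \<in> X" "t \<in> X" using S T by (simp_all add: is_Lsup_mem)
  have "top \<le> E s t" using is_Lsup_upper[OF O T] by (intro is_Lsup_least[OF S \<open>t \<in> X\<close>]) simp
  moreover have "top \<le> E t s" using is_Lsup_upper[OF O S] by (intro is_Lsup_least[OF T \<open>s \<in> X\<close>]) simp
  ultimately show ?thesis
    using Lorder_antisym[OF O \<open>s \<in> X\<close> \<open>t \<in> X\<close>] by (simp add: top_unique)
qed

lemma is_Lsup_if_between:
  assumes "Lorder X E" and "is_Lsup X E D s"
    and "\<And>x. x \<in> X \<Longrightarrow> D x \<le> D' x" and "\<And>x. x \<in> X \<Longrightarrow> D' x \<le> (E x s::'l)"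
  shows "is_Lsup X E D' s"
proof (rule is_LsupI)
  show "s \<in> X" using assms(2) by (rule is_Lsup_mem)
  fix x y assume "x \<in> X" "y \<in> X"
  have "inf (E s y) (D' x) \<le> inf (E x s) (E s y)"
    using assms(4)[OF \<open>x \<in> X\<close>] by (simp add: le_infI1 le_infI2)
  also have "\<dots> \<le> E x y" using Lorder_trans[OF assms(1) \<open>x \<in> X\<close> \<open>s \<in> X\<close> \<open>y \<in> X\<close>] .
  finally show "inf (E s y) (D' x) \<le> E x y" .
next
  fix y assume "y \<in> X"
  have "Lsub X D' (ldown X E y) \<le> Lsub X D (ldown X E y)" using assms(3) by (rule Lsub_antimono)
  then show "Lsub X D' (ldown X E y) \<le> E s y" using is_Lsup_eq[OF assms(2) \<open>y \<in> X\<close>] by simp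
qed

lemma
  assumes "Lorder X (E::'a \<Rightarrow> 'a \<Rightarrow> 'l)" and "x \<in> X"
  shows Lideal_ldown: "Lideal X E (ldown X E x)"
    and is_Lsup_ldown: "is_Lsup X E (ldown X E x) x"
proof -
  have xx: "E x x = top" using assms by (rule Lorder_refl)
  have "top \<le> (SUP y\<in>X. ldown X E x y)"
    using SUP_upper[OF assms(2), of "ldown X E x"] assms(2) xx by (simp add: ldown_def)
  moreover have "inf (ldown X E x y1) (ldown X E x y2)
      \<le> (SUP z\<in>X. inf (ldown X E x z) (inf (E y1 z) (E y2 z)))" if "y1 \<in> X" "y2 \<in> X" for y1 y2
    using that assms(2) xx by (intro SUP_upper2[OF assms(2)]) (simp add: ldown_def)
  moreover have "inf (ldown X E x y) (E z y) \<le> ldown X E x z" if "y \<in> X" "z \<in> X" for y z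
    using that Lorder_trans[OF assms(1) \<open>z \<in> X\<close> \<open>y \<in> X\<close> assms(2)]
    by (simp add: ldown_def inf_commute)
  ultimately show "Lideal X E (ldown X E x)"
    unfolding Lideal_def Ldirected_def Llower_def Lsubset_def
    by (simp add: top_unique) (simp add: ldown_def)
  show "is_Lsup X E (ldown X E x) x"
  proof (rule is_LsupI[OF assms(2)])
    fix z y assume "z \<in> X" "y \<in> X"
    have "inf (E x y) (E z x) \<le> E z y"
      using Lorder_trans[OF assms(1) \<open>z \<in> X\<close> assms(2) \<open>y \<in> X\<close>] by (simp add: inf_commute)
    then show "inf (E x y) (ldown X E x z) \<le> E z y" using \<open>z \<in> X\<close> by (simp add: ldown_def)
  next
    fix y assume "y \<in> X"
    have "inf (Lsub X (ldown X E x) (ldown X E y)) (ldown X E x x) \<le> ldown X E y x"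
      using assms(2) by (rule Lsub_inf_le)
    then show "Lsub X (ldown X E x) (ldown X E y) \<le> E x y" using assms(2) xx by (simp add: ldown_def)
  qed
qed

lemma Ldirected_SUP_inf_eq:
  assumes D: "Ldirected X E D"
    and f: "\<And>x y. x \<in> X \<Longrightarrow> y \<in> X \<Longrightarrow> inf (f x) (E x y) \<le> f y"
    and g: "\<And>x y. x \<in> X \<Longrightarrow> y \<in> X \<Longrightarrow> inf (g x) (E x y) \<le> g y"
  shows "(SUP x\<in>X. inf (D x) (inf (f x) (g x)))
    = inf (SUP x\<in>X. inf (D x) (f x)) (SUP x\<in>X. inf (D x) (g x::'l))"
proof (rule antisym)
  show "(SUP x\<in>X. inf (D x) (inf (f x) (g x)))
      \<le> inf (SUP x\<in>X. inf (D x) (f x)) (SUP x\<in>X. inf (D x) (g x))"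
    by (intro le_infI SUP_subset_mono[OF order_refl]) (simp_all add: le_infI2)
  show "inf (SUP x\<in>X. inf (D x) (f x)) (SUP x\<in>X. inf (D x) (g x))
      \<le> (SUP x\<in>X. inf (D x) (inf (f x) (g x)))"
  proof (rule SUP_inf_SUP_leI)
    fix x y assume "x \<in> X" "y \<in> X"
    have "inf (inf (D x) (f x)) (inf (D y) (g y)) = inf (inf (D x) (D y)) (inf (f x) (g y))"
      by (simp add: ac_simps)
    also have "\<dots> \<le> inf (SUP z\<in>X. inf (D z) (inf (E x z) (E y z))) (inf (f x) (g y))"
      using Ldirected_inf_le[OF D \<open>x \<in> X\<close> \<open>y \<in> X\<close>] by (rule inf_mono) simp
    also have "\<dots> \<le> (SUP z\<in>X. inf (D z) (inf (f z) (g z)))"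
    proof (rule SUP_inf_leI)
      fix z assume "z \<in> X"
      have "inf (inf (D z) (inf (E x z) (E y z))) (inf (f x) (g y))
          = inf (D z) (inf (inf (f x) (E x z)) (inf (g y) (E y z)))"
        by (simp add: ac_simps)
      also have "\<dots> \<le> inf (D z) (inf (f z) (g z))"
        using f[OF \<open>x \<in> X\<close> \<open>z \<in> X\<close>] g[OF \<open>y \<in> X\<close> \<open>z \<in> X\<close>] by (intro inf_mono order_refl)
      also have "\<dots> \<le> (SUP z\<in>X. inf (D z) (inf (f z) (g z)))" using \<open>z \<in> X\<close> by (rule SUP_upper)
      finally show "inf (inf (D z) (inf (E x z) (E y z))) (inf (f x) (g y))
          \<le> (SUP z\<in>X. inf (D z) (inf (f z) (g z)))" .
    qed
    finally show "inf (inf (D x) (f x)) (inf (D y) (g y)) \<le> (SUP z\<in>X. inf (D z) (inf (f z) (g z)))" .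
  qed
qed

lemma lower_closure_ge: "Lorder X E \<Longrightarrow> x \<in> X \<Longrightarrow> D x \<le> (lower_closure X E D x::'l)"
  unfolding lower_closure_def by (auto intro: SUP_upper2 simp: Lorder_refl)

lemma inf_lower_closure:
  assumes O: "Lorder X (E::'a \<Rightarrow> 'a \<Rightarrow> 'l)" and D: "Ldirected X E D" and "y1 \<in> X" "y2 \<in> X"
  shows "inf (lower_closure X E D y1) (lower_closure X E D y2)
    = (SUP z\<in>X. inf (D z) (inf (E y1 z) (E y2 z)))"
proof -
  have "(SUP z\<in>X. inf (D z) (inf (E y1 z) (E y2 z)))
      = inf (SUP z\<in>X. inf (D z) (E y1 z)) (SUP z\<in>X. inf (D z) (E y2 z))"
    using D by (rule Ldirected_SUP_inf_eq) (simp_all add: Lorder_trans[OF O] assms(3,4))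
  then show ?thesis using assms(3,4) by (simp add: lower_closure_def)
qed

lemma Ldirected_if_between:
  assumes O: "Lorder X (E::'a \<Rightarrow> 'a \<Rightarrow> 'l)" and D: "Ldirected X E D"
    and below: "\<And>x. x \<in> X \<Longrightarrow> D x \<le> D' x"
    and above: "\<And>x. x \<in> X \<Longrightarrow> D' x \<le> lower_closure X E D x"
  shows "Ldirected X E D'"
  unfolding Ldirected_def
proof (intro conjI ballI)
  have "top = (SUP x\<in>X. D x)" using Ldirected_SUP_eq_top[OF D] by simp
  also have "\<dots> \<le> (SUP x\<in>X. D' x)" using below by (rule SUP_subset_mono[OF order_refl])
  finally show "(SUP x\<in>X. D' x) = top" by (simp add: top_unique)
next
  fix y1 y2 assume "y1 \<in> X" "y2 \<in> X"
  have "inf (D' y1) (D' y2) \<le> inf (lower_closure X E D y1) (lower_closure X E D y2)"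
    using \<open>y1 \<in> X\<close> \<open>y2 \<in> X\<close> by (intro inf_mono above)
  also have "\<dots> = (SUP z\<in>X. inf (D z) (inf (E y1 z) (E y2 z)))"
    using O D \<open>y1 \<in> X\<close> \<open>y2 \<in> X\<close> by (rule inf_lower_closure)
  also have "\<dots> \<le> (SUP z\<in>X. inf (D' z) (inf (E y1 z) (E y2 z)))"
    using below by (intro SUP_subset_mono[OF order_refl] inf_mono order_refl)
  finally show "inf (D' y1) (D' y2) \<le> (SUP z\<in>X. inf (D' z) (inf (E y1 z) (E y2 z)))" .
qed

lemma Lideal_lower_closure:
  assumes O: "Lorder X (E::'a \<Rightarrow> 'a \<Rightarrow> 'l)" and D: "Ldirected X E D"
  shows "Lideal X E (lower_closure X E D)"
proof -
  have "inf (lower_closure X E D x) (E y x) \<le> lower_closure X E D y" if "x \<in> X" "y \<in> X" for x y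
  proof -
    have "inf (inf (D w) (E x w)) (E y x) \<le> inf (D w) (E y w)" if "w \<in> X" for w
      by (intro le_infI order_trans[OF _ Lorder_trans[OF O \<open>y \<in> X\<close> \<open>x \<in> X\<close> \<open>w \<in> X\<close>]])
        (simp_all add: le_infI1 le_infI2)
    then have "inf (SUP w\<in>X. inf (D w) (E x w)) (E y x) \<le> (SUP w\<in>X. inf (D w) (E y w))"
      by (intro SUP_inf_leI) (blast intro: SUP_upper2)
    then show ?thesis using that by (simp add: lower_closure_def)
  qed
  moreover have "Ldirected X E (lower_closure X E D)"
    using O D lower_closure_ge[OF O, of _ D] by (rule Ldirected_if_between) simp_all
  ultimately show ?thesis by (simp add: Lideal_def Llower_def Lsubset_def lower_closure_def)
qed

lemma is_Lsup_lower_closure: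
  assumes O: "Lorder X (E::'a \<Rightarrow> 'a \<Rightarrow> 'l)" and S: "is_Lsup X E D s"
  shows "is_Lsup X E (lower_closure X E D) s"
proof (rule is_Lsup_if_between[OF O S lower_closure_ge[OF O, of _ D]])
  fix x assume "x \<in> X"
  have "s \<in> X" using S by (rule is_Lsup_mem)
  have "inf (D w) (E x w) \<le> E x s" if "w \<in> X" for w
    using is_Lsup_upper[OF O S that]
    by (intro order_trans[OF _ Lorder_trans[OF O \<open>x \<in> X\<close> that \<open>s \<in> X\<close>]])
      (simp add: le_infI1 le_infI2)
  then show "lower_closure X E D x \<le> E x s"
    using \<open>x \<in> X\<close> by (simp add: lower_closure_def SUP_least)
qed

lemma SUP_Limage_inf:
  assumes "f ` X \<subseteq> Y"
  shows "(SUP y\<in>Y. inf (Limage f X D y) (G y)) = (SUP x\<in>X. inf (D x) (G (f x)::'l))"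
proof (rule antisym)
  have "inf (D x) (G y) \<le> (SUP x\<in>X. inf (D x) (G (f x)))" if "x \<in> X" "f x = y" for x y
    using that by (auto intro: SUP_upper2)
  then show "(SUP y\<in>Y. inf (Limage f X D y) (G y)) \<le> (SUP x\<in>X. inf (D x) (G (f x)))"
    unfolding Limage_def by (intro SUP_least SUP_inf_leI) blast
  have "inf (D x) (G (f x)) \<le> inf (Limage f X D (f x)) (G (f x))" if "x \<in> X" for x
    using that unfolding Limage_def by (intro inf_mono SUP_upper) simp_all
  then show "(SUP x\<in>X. inf (D x) (G (f x))) \<le> (SUP y\<in>Y. inf (Limage f X D y) (G y))"
    using assms by (intro SUP_least) (blast intro: SUP_upper2)
qed

lemma Lsubset_Limage: "f ` X \<subseteq> Y \<Longrightarrow> Lsubset Y (Limage f X D)"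
  unfolding Lsubset_def Limage_def by (auto intro!: SUP_bot_conv(2)[THEN iffD2])

lemma Ldirected_Limage:
  assumes f: "f ` X \<subseteq> Y" and D: "Ldirected X E D"
    and mono: "\<And>x y. x \<in> X \<Longrightarrow> y \<in> X \<Longrightarrow> E x y \<le> E' (f x) (f y)"
  shows "Ldirected Y E' (Limage f X D::'b \<Rightarrow> 'l)"
  unfolding Ldirected_def
proof (intro conjI ballI)
  show "(SUP y\<in>Y. Limage f X D y) = top"
    using SUP_Limage_inf[OF f, of D "\<lambda>_. top"] Ldirected_SUP_eq_top[OF D] by simp
next
  fix y1 y2 assume "y1 \<in> Y" "y2 \<in> Y"
  have "inf (D x1) (D x2) \<le> (SUP y\<in>Y. inf (Limage f X D y) (inf (E' y1 y) (E' y2 y)))"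
    if "x1 \<in> X" "x2 \<in> X" "f x1 = y1" "f x2 = y2" for x1 x2
  proof -
    have "inf (D x1) (D x2) \<le> (SUP z\<in>X. inf (D z) (inf (E x1 z) (E x2 z)))"
      using D that(1,2) by (rule Ldirected_inf_le)
    also have "\<dots> \<le> (SUP z\<in>X. inf (D z) (inf (E' y1 (f z)) (E' y2 (f z))))"
      using mono that by (intro SUP_subset_mono[OF order_refl] inf_mono order_refl) auto
    also have "\<dots> = (SUP y\<in>Y. inf (Limage f X D y) (inf (E' y1 y) (E' y2 y)))"
      using SUP_Limage_inf[OF f] by simp
    finally show ?thesis .
  qed
  then show "inf (Limage f X D y1) (Limage f X D y2)
      \<le> (SUP y\<in>Y. inf (Limage f X D y) (inf (E' y1 y) (E' y2 y)))"
    unfolding Limage_def[of f X D y1] Limage_def[of f X D y2] by (intro SUP_inf_SUP_leI) blast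
qed

section \<open>The way-below relation\<close>

lemma wayb_le_Lideal:
  "Lideal X E I \<Longrightarrow> is_Lsup X E I s \<Longrightarrow> y \<in> X \<Longrightarrow> inf (wayb X E x y) (E x s) \<le> (I y::'l)"
  unfolding wayb_def le_limp_iff[symmetric] by (auto intro: Inf_lower)

lemma wayb_geI:
  assumes "y \<in> X" and "\<And>I s. Lideal X E I \<Longrightarrow> is_Lsup X E I s \<Longrightarrow> inf c (E x s) \<le> (I y::'l)"
  shows "c \<le> wayb X E x y"
  using assms unfolding wayb_def by (auto intro!: Inf_greatest simp: le_limp_iff)

lemma wayb_le:
  assumes O: "Lorder X (E::'a \<Rightarrow> 'a \<Rightarrow> 'l)" and "x \<in> X" "y \<in> X"
  shows "wayb X E x y \<le> E y x"
  using wayb_le_Lideal[OF Lideal_ldown[OF O \<open>x \<in> X\<close>] is_Lsup_ldown[OF O \<open>x \<in> X\<close>] \<open>y \<in> X\<close>, of x]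
  by (simp add: Lorder_refl[OF O \<open>x \<in> X\<close>] ldown_def \<open>y \<in> X\<close>)

lemma wayb_le_lower_closure:
  assumes O: "Lorder X (E::'a \<Rightarrow> 'a \<Rightarrow> 'l)" and D: "Ldirected X E D" and S: "is_Lsup X E D s"
    and "y \<in> X"
  shows "wayb X E s y \<le> lower_closure X E D y"
  using wayb_le_Lideal[OF Lideal_lower_closure[OF O D] is_Lsup_lower_closure[OF O S] \<open>y \<in> X\<close>, of s]
  by (simp add: Lorder_refl[OF O is_Lsup_mem[OF S]])

lemma wayb_lower:
  assumes "y \<in> X" and "w \<in> X"
  shows "inf (wayb X E x y) (E w y) \<le> (wayb X E x w::'l)"
proof (rule wayb_geI[OF \<open>w \<in> X\<close>])
  fix I s assume I: "Lideal X E I" and S: "is_Lsup X E I s"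
  have "inf (inf (wayb X E x y) (E w y)) (E x s) = inf (inf (wayb X E x y) (E x s)) (E w y)"
    by (simp add: ac_simps)
  also have "\<dots> \<le> inf (I y) (E w y)" using wayb_le_Lideal[OF I S \<open>y \<in> X\<close>] by (rule inf_mono) simp
  also have "\<dots> \<le> I w" using I assms by (rule Lideal_Llower)
  finally show "inf (inf (wayb X E x y) (E w y)) (E x s) \<le> I w" .
qed

lemma wayb_upper:
  assumes O: "Lorder X (E::'a \<Rightarrow> 'a \<Rightarrow> 'l)" and "x \<in> X" "y \<in> X" "z \<in> X"
  shows "inf (wayb X E x y) (E x z) \<le> wayb X E z y"
proof (rule wayb_geI[OF \<open>y \<in> X\<close>])
  fix I s assume I: "Lideal X E I" and S: "is_Lsup X E I s"
  have "inf (inf (wayb X E x y) (E x z)) (E z s) = inf (wayb X E x y) (inf (E x z) (E z s))"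
    by (simp add: ac_simps)
  also have "\<dots> \<le> inf (wayb X E x y) (E x s)"
    using Lorder_trans[OF O \<open>x \<in> X\<close> \<open>z \<in> X\<close> is_Lsup_mem[OF S]] by (rule inf_mono[OF order_refl])
  also have "\<dots> \<le> I y" using I S \<open>y \<in> X\<close> by (rule wayb_le_Lideal)
  finally show "inf (inf (wayb X E x y) (E x z)) (E z s) \<le> I y" .
qed

section \<open>Scott \<open>L\<close>-topology\<close>

lemma lconst_scott: "lconst X (c::'l) \<in> scott X E"
proof (rule scottI)
  show "Lsubset X (lconst X c)" "Lupper X E (lconst X c)"
    by (simp_all add: Lsubset_def Lupper_def lconst_def le_infI1)
  fix D s assume "Lsubset X D" "Ldirected X E D" "is_Lsup X E D s"
  have "(SUP x\<in>X. inf (lconst X c x) (D x)) = inf c (SUP x\<in>X. D x)"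
    by (simp add: inf_SUP_frame lconst_def)
  then show "lconst X c s = (SUP x\<in>X. inf (lconst X c x) (D x))"
    using Ldirected_SUP_eq_top[OF \<open>Ldirected X E D\<close>] is_Lsup_mem[OF \<open>is_Lsup X E D s\<close>]
    by (simp add: lconst_def)
qed

lemma scott_inf:
  assumes A: "A \<in> scott X (E::'a \<Rightarrow> 'a \<Rightarrow> 'l)" and B: "B \<in> scott X E"
  shows "inf A B \<in> scott X E"
proof (rule scottI)
  show "Lsubset X (inf A B)" using scott_eq_bot[OF A] scott_eq_bot[OF B] by (simp add: Lsubset_def)
  have "inf (inf (A x) (B x)) (E x y) \<le> inf (A y) (B y)" if "x \<in> X" "y \<in> X" for x y
    by (intro le_infI order_trans[OF _ scott_upper[OF A that]] order_trans[OF _ scott_upper[OF B that]])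
      (simp_all add: le_infI1 le_infI2)
  then show "Lupper X E (inf A B)" by (simp add: Lupper_def)
  fix D s assume D: "Lsubset X D" "Ldirected X E D" "is_Lsup X E D s"
  have "(SUP x\<in>X. inf (D x) (inf (A x) (B x)))
      = inf (SUP x\<in>X. inf (D x) (A x)) (SUP x\<in>X. inf (D x) (B x))"
    using D(2) scott_upper[OF A] scott_upper[OF B] by (rule Ldirected_SUP_inf_eq)
  then show "(inf A B) s = (SUP x\<in>X. inf ((inf A B) x) (D x))"
    by (simp add: scott_eq_SUP[OF A D] scott_eq_SUP[OF B D] inf_commute)
qed

lemma scott_Sup:
  assumes AA: "\<A> \<subseteq> scott X (E::'a \<Rightarrow> 'a \<Rightarrow> 'l)"
  shows "Sup \<A> \<in> scott X E"
proof (rule scottI)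
  have "A x = bot" if "A \<in> \<A>" "x \<notin> X" for A x
    using scott_eq_bot[OF subsetD[OF AA that(1)] that(2)] .
  then show "Lsubset X (Sup \<A>)" by (simp add: Lsubset_def)
  have "inf (SUP A\<in>\<A>. A x) (E x y) \<le> (SUP A\<in>\<A>. A y)" if "x \<in> X" "y \<in> X" for x y
  proof (rule SUP_inf_leI)
    fix A assume "A \<in> \<A>"
    then have "inf (A x) (E x y) \<le> A y" using AA that by (intro scott_upper) auto
    then show "inf (A x) (E x y) \<le> (SUP A\<in>\<A>. A y)" by (rule SUP_upper2[OF \<open>A \<in> \<A>\<close>])
  qed
  then show "Lupper X E (Sup \<A>)" by (simp add: Lupper_def)
  fix D s assume D: "Lsubset X D" "Ldirected X E D" "is_Lsup X E D s"
  have "(SUP A\<in>\<A>. A s) = (SUP A\<in>\<A>. SUP x\<in>X. inf (A x) (D x))"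
    using AA scott_eq_SUP[OF _ D] by (intro SUP_cong) auto
  also have "\<dots> = (SUP x\<in>X. inf (SUP A\<in>\<A>. A x) (D x))"
    by (subst SUP_commute) (simp add: SUP_inf_frame)
  finally show "(Sup \<A>) s = (SUP x\<in>X. inf ((Sup \<A>) x) (D x))" by simp
qed

section \<open>Points of the Scott \<open>L\<close>-topology\<close>

lemma le_pt_order_iff: "(c::'l) \<le> pt_order P e p q \<longleftrightarrow> (\<forall>A\<in>scott P e. inf c (p A) \<le> q A)"
  unfolding pt_order_def by (rule le_Lsub_iff)

lemma pt_order_inf_le: "A \<in> scott P e \<Longrightarrow> inf (pt_order P e p q) (p A) \<le> (q A::'l)"
  unfolding pt_order_def by (rule Lsub_inf_le)

lemma Lorder_pt_order: "Lorder (pts P e) (pt_order P (e::'a \<Rightarrow> 'a \<Rightarrow> 'l))"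
  unfolding Lorder_def
proof (intro conjI ballI impI)
  fix p q r :: "('a \<Rightarrow> 'l) \<Rightarrow> 'l"
  show "pt_order P e p p = top" using le_pt_order_iff[of top P e p p] by (simp add: top_unique)
  have "inf (inf (pt_order P e p q) (pt_order P e q r)) (p A) \<le> r A" if "A \<in> scott P e" for A
  proof -
    have "inf (inf (pt_order P e p q) (pt_order P e q r)) (p A)
        = inf (pt_order P e q r) (inf (pt_order P e p q) (p A))"
      by (simp add: ac_simps)
    also have "\<dots> \<le> inf (pt_order P e q r) (q A)"
      using pt_order_inf_le[OF that] by (rule inf_mono[OF order_refl])
    also have "\<dots> \<le> r A" using that by (rule pt_order_inf_le)
    finally show ?thesis .
  qed
  then show "inf (pt_order P e p q) (pt_order P e q r) \<le> pt_order P e p r"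
    by (simp add: le_pt_order_iff)
next
  fix p q assume "p \<in> pts P e" "q \<in> pts P e"
    and "inf (pt_order P e p q) (pt_order P e q p) = top"
  then have "p A \<le> q A" "q A \<le> p A" if "A \<in> scott P e" for A
    using pt_order_inf_le[OF that, of p q] pt_order_inf_le[OF that, of q p] by simp_all
  then have "p A = q A" for A
    using pts_eq_bot[OF \<open>p \<in> pts P e\<close>] pts_eq_bot[OF \<open>q \<in> pts P e\<close>]
    by (cases "A \<in> scott P e") (simp_all add: antisym)
  then show "p = q" by (rule ext)
qed

lemma point_of_pts:
  assumes "x \<in> P"
  shows "point_of P (e::'a \<Rightarrow> 'a \<Rightarrow> 'l) x \<in> pts P e"
proof (rule ptsI)
  fix A B assume "A \<in> scott P e" "B \<in> scott P e"
  then show "point_of P e x (inf A B) = inf (point_of P e x A) (point_of P e x B)"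
    by (simp add: point_of_def scott_inf)
next
  fix \<A> assume "\<A> \<subseteq> scott P e"
  then have "(SUP A\<in>\<A>. A x) = (SUP A\<in>\<A>. point_of P e x A)"
    by (intro SUP_cong) (auto simp: point_of_def)
  then show "point_of P e x (Sup \<A>) = (SUP A\<in>\<A>. point_of P e x A)"
    using scott_Sup[OF \<open>\<A> \<subseteq> scott P e\<close>] by (simp add: point_of_def)
next
  fix c
  show "point_of P e x (lconst P c) = c"
    using lconst_scott[of P c e] assms by (simp add: point_of_def lconst_def)
qed (simp add: point_of_def)

lemma point_of_image: "point_of P (e::'a \<Rightarrow> 'a \<Rightarrow> 'l) ` P \<subseteq> pts P e"
  using point_of_pts by (rule image_subsetI)

lemma le_pt_order_point_of:
  "x \<in> P \<Longrightarrow> y \<in> P \<Longrightarrow> e x y \<le> pt_order P (e::'a \<Rightarrow> 'a \<Rightarrow> 'l) (point_of P e x) (point_of P e y)"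
  using scott_upper[of _ P e x y] by (simp add: le_pt_order_iff point_of_def inf_commute)

lemma pt_join_pts:
  assumes D: "Ldirected (pts P e) (pt_order P (e::'a \<Rightarrow> 'a \<Rightarrow> 'l)) D"
  shows "pt_join P e D \<in> pts P e"
proof (rule ptsI)
  fix A B assume A: "A \<in> scott P e" and B: "B \<in> scott P e"
  have "(SUP q\<in>pts P e. inf (D q) (q (inf A B))) = (SUP q\<in>pts P e. inf (D q) (inf (q A) (q B)))"
    using A B by (intro SUP_cong) (simp_all add: pts_inf)
  also have "\<dots> = inf (SUP q\<in>pts P e. inf (D q) (q A)) (SUP q\<in>pts P e. inf (D q) (q B))"
    using D by (rule Ldirected_SUP_inf_eq)
      (use pt_order_inf_le[OF A] pt_order_inf_le[OF B] in \<open>simp_all add: inf_commute\<close>)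
  finally show "pt_join P e D (inf A B) = inf (pt_join P e D A) (pt_join P e D B)"
    using A B scott_inf[OF A B] by (simp add: pt_join_def)
next
  fix \<A> assume \<A>: "\<A> \<subseteq> scott P e"
  have "(SUP q\<in>pts P e. inf (D q) (q (Sup \<A>))) = (SUP q\<in>pts P e. SUP A\<in>\<A>. inf (D q) (q A))"
    using \<A> by (intro SUP_cong) (simp_all add: pts_Sup inf_SUP_frame)
  also have "\<dots> = (SUP A\<in>\<A>. SUP q\<in>pts P e. inf (D q) (q A))" by (rule SUP_commute)
  also have "\<dots> = (SUP A\<in>\<A>. pt_join P e D A)"
    using \<A> by (intro SUP_cong) (auto simp: pt_join_def)
  finally show "pt_join P e D (Sup \<A>) = (SUP A\<in>\<A>. pt_join P e D A)"
    using scott_Sup[OF \<A>] by (simp add: pt_join_def)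
next
  fix c
  have "(SUP q\<in>pts P e. inf (D q) (q (lconst P c))) = inf c (SUP q\<in>pts P e. D q)"
    by (simp add: pts_lconst inf_SUP_frame inf_commute)
  then show "pt_join P e D (lconst P c) = c"
    using lconst_scott[of P c e] Ldirected_SUP_eq_top[OF D] by (simp add: pt_join_def)
qed (simp add: pt_join_def)

lemma is_Lsup_pt_join:
  assumes D: "Ldirected (pts P e) (pt_order P (e::'a \<Rightarrow> 'a \<Rightarrow> 'l)) D"
  shows "is_Lsup (pts P e) (pt_order P e) D (pt_join P e D)"
proof (rule is_LsupI[OF pt_join_pts[OF D]])
  fix q r assume "q \<in> pts P e" "r \<in> pts P e"
  have "inf (inf (pt_order P e (pt_join P e D) r) (D q)) (q A) \<le> r A" if A: "A \<in> scott P e" for A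
  proof -
    have "inf (D q) (q A) \<le> pt_join P e D A"
      using A \<open>q \<in> pts P e\<close> by (auto simp: pt_join_def intro: SUP_upper2)
    then have "inf (inf (pt_order P e (pt_join P e D) r) (D q)) (q A)
        \<le> inf (pt_order P e (pt_join P e D) r) (pt_join P e D A)"
      by (subst inf_assoc) (rule inf_mono[OF order_refl])
    also have "\<dots> \<le> r A" using A by (rule pt_order_inf_le)
    finally show ?thesis .
  qed
  then show "inf (pt_order P e (pt_join P e D) r) (D q) \<le> pt_order P e q r"
    by (simp add: le_pt_order_iff)
next
  fix r assume "r \<in> pts P e"
  let ?T = "Lsub (pts P e) D (ldown (pts P e) (pt_order P e) r)"
  have "inf ?T (pt_join P e D A) \<le> r A" if A: "A \<in> scott P e" for A
  proof -
    have "inf ?T (inf (D q) (q A)) \<le> r A" if "q \<in> pts P e" for q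
    proof -
      have "inf ?T (D q) \<le> pt_order P e q r"
        using Lsub_inf_le[OF that, of D "ldown (pts P e) (pt_order P e) r"] that
        by (simp add: ldown_def)
      then have "inf ?T (inf (D q) (q A)) \<le> inf (pt_order P e q r) (q A)"
        by (subst inf_assoc[symmetric]) (rule inf_mono[OF _ order_refl])
      also have "\<dots> \<le> r A" using A by (rule pt_order_inf_le)
      finally show ?thesis .
    qed
    then show ?thesis using A by (simp add: pt_join_def inf_SUP_leI)
  qed
  then show "?T \<le> pt_order P e (pt_join P e D) r" by (simp add: le_pt_order_iff)
qed

lemma is_Lsup_pts_imp_eq_pt_join:
  "Ldirected (pts P e) (pt_order P (e::'a \<Rightarrow> 'a \<Rightarrow> 'l)) D \<Longrightarrow> is_Lsup (pts P e) (pt_order P e) D s \<Longrightarrow>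
    s = pt_join P e D"
  using is_Lsup_unique[OF Lorder_pt_order] is_Lsup_pt_join by blast

lemma Ldcpo_pts: "Ldcpo (pts P e) (pt_order P (e::'a \<Rightarrow> 'a \<Rightarrow> 'l))"
  unfolding Ldcpo_def using Lorder_pt_order is_Lsup_pt_join by blast

lemma phi_scott:
  assumes A: "A \<in> scott P (e::'a \<Rightarrow> 'a \<Rightarrow> 'l)"
  shows "phi P e A \<in> scott (pts P e) (pt_order P e)"
proof (rule scottI)
  show "Lsubset (pts P e) (phi P e A)" by (simp add: Lsubset_def phi_def)
  show "Lupper (pts P e) (pt_order P e) (phi P e A)"
    using pt_order_inf_le[OF A] by (simp add: Lupper_def phi_def inf_commute)
  fix D s assume "Lsubset (pts P e) D" and D: "Ldirected (pts P e) (pt_order P e) D"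
    and "is_Lsup (pts P e) (pt_order P e) D s"
  then have "s = pt_join P e D" "s \<in> pts P e" by (simp_all add: is_Lsup_pts_imp_eq_pt_join is_Lsup_mem)
  then show "phi P e A s = (SUP q\<in>pts P e. inf (phi P e A q) (D q))"
    using A by (simp add: phi_def pt_join_def inf_commute)
qed

lemma Ldirected_Limage_point_of:
  assumes "Ldirected P (e::'a \<Rightarrow> 'a \<Rightarrow> 'l) D"
  shows "Ldirected (pts P e) (pt_order P e) (Limage (point_of P e) P D)"
  by (rule Ldirected_Limage[OF point_of_image assms]) (rule le_pt_order_point_of)

lemma pt_join_Limage_point_of:
  "A \<in> scott P e \<Longrightarrow>
    pt_join P e (Limage (point_of P (e::'a \<Rightarrow> 'a \<Rightarrow> 'l)) P D) A = (SUP x\<in>P. inf (D x) (A x))"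
  by (simp add: pt_join_def SUP_Limage_inf[OF point_of_image] point_of_def)

lemma is_Lsup_Limage_point_of:
  assumes "Lsubset P D" and D: "Ldirected P (e::'a \<Rightarrow> 'a \<Rightarrow> 'l) D" and S: "is_Lsup P e D s"
  shows "is_Lsup (pts P e) (pt_order P e) (Limage (point_of P e) P D) (point_of P e s)"
proof -
  have "pt_join P e (Limage (point_of P e) P D) = point_of P e s"
  proof
    fix A
    show "pt_join P e (Limage (point_of P e) P D) A = point_of P e s A"
    proof (cases "A \<in> scott P e")
      case True
      then show ?thesis
        using scott_eq_SUP[OF True \<open>Lsubset P D\<close> D S]
        by (simp add: pt_join_Limage_point_of point_of_def inf_commute)
    qed (simp add: pt_join_def point_of_def)
  qed
  then show ?thesis using is_Lsup_pt_join[OF Ldirected_Limage_point_of[OF D]] by simp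
qed

lemma scott_pts_comp_point_of:
  assumes U: "U \<in> scott (pts P e) (pt_order P (e::'a \<Rightarrow> 'a \<Rightarrow> 'l))"
  shows "(\<lambda>x. if x \<in> P then U (point_of P e x) else bot) \<in> scott P e"
    (is "?A \<in> _")
proof (rule scottI)
  show "Lsubset P ?A" by (simp add: Lsubset_def)
  have "inf (U (point_of P e x)) (e x y) \<le> U (point_of P e y)" if "x \<in> P" "y \<in> P" for x y
    by (rule order_trans[OF inf_mono[OF order_refl le_pt_order_point_of[OF that]]
          scott_upper[OF U point_of_pts[OF that(1)] point_of_pts[OF that(2)]]])
  then show "Lupper P e ?A" by (simp add: Lupper_def)
  fix D s assume D: "Lsubset P D" "Ldirected P e D" "is_Lsup P e D s"
  have "U (point_of P e s)
      = (SUP q\<in>pts P e. inf (U q) (Limage (point_of P e) P D q))"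
    using scott_eq_SUP[OF U Lsubset_Limage[OF point_of_image] Ldirected_Limage_point_of[OF D(2)]
        is_Lsup_Limage_point_of[OF D]] .
  also have "\<dots> = (SUP x\<in>P. inf (D x) (U (point_of P e x)))"
    using SUP_Limage_inf[OF point_of_image, where D=D and G=U] by (simp add: inf_commute)
  finally show "?A s = (SUP x\<in>P. inf (?A x) (D x))"
    using is_Lsup_mem[OF D(3)] by (simp add: inf_commute cong: SUP_cong)
qed

section \<open>Continuous \<open>L\<close>-ordered sets\<close>

context
  fixes P :: "'a set" and e :: "'a \<Rightarrow> 'a \<Rightarrow> 'l"
  assumes cont: "cont_Lordered P e"
begin

lemma Lorder_cont: "Lorder P e"
  using cont by (simp add: cont_Lordered_def)

lemma Ldirected_wayb: "x \<in> P \<Longrightarrow> Ldirected P e (wayb P e x)"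
  using cont by (simp add: cont_Lordered_def)

lemma is_Lsup_wayb: "x \<in> P \<Longrightarrow> is_Lsup P e (wayb P e x) x"
  using cont by (simp add: cont_Lordered_def)

lemma wayb_comp_ge:
  "z \<in> P \<Longrightarrow> y \<in> P \<Longrightarrow> inf (wayb P e x z) (wayb P e z y) \<le> wayb_comp P e x y"
  unfolding wayb_comp_def by (auto intro: SUP_upper2)

lemma wayb_comp_inf_le:
  assumes "x \<in> P" "y1 \<in> P" "y2 \<in> P"
  shows "inf (wayb_comp P e x y1) (wayb_comp P e x y2)
    \<le> (SUP y\<in>P. inf (wayb_comp P e x y) (inf (e y1 y) (e y2 y)))"
proof -
  let ?w = "wayb P e"
  have "(SUP z\<in>P. inf (?w x z) (inf (?w z y1) (?w z y2)))
      = inf (SUP z\<in>P. inf (?w x z) (?w z y1)) (SUP z\<in>P. inf (?w x z) (?w z y2))"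
    using Ldirected_wayb[OF \<open>x \<in> P\<close>] by (rule Ldirected_SUP_inf_eq)
      (simp_all add: wayb_upper[OF Lorder_cont] assms)
  then have "inf (wayb_comp P e x y1) (wayb_comp P e x y2)
      = (SUP z\<in>P. inf (?w x z) (inf (?w z y1) (?w z y2)))"
    using assms by (simp add: wayb_comp_def)
  also have "\<dots> \<le> (SUP y\<in>P. inf (wayb_comp P e x y) (inf (e y1 y) (e y2 y)))"
  proof (rule SUP_least)
    fix z assume "z \<in> P"
    have "inf (?w x z) (inf (?w z y1) (?w z y2))
        \<le> inf (?w x z) (SUP y\<in>P. inf (?w z y) (inf (e y1 y) (e y2 y)))"
      using Ldirected_inf_le[OF Ldirected_wayb[OF \<open>z \<in> P\<close>] assms(2,3)]
      by (rule inf_mono[OF order_refl])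
    also have "\<dots> \<le> (SUP y\<in>P. inf (wayb_comp P e x y) (inf (e y1 y) (e y2 y)))"
    proof (rule inf_SUP_leI)
      fix y assume "y \<in> P"
      have "inf (?w x z) (inf (?w z y) (inf (e y1 y) (e y2 y)))
          = inf (inf (?w x z) (?w z y)) (inf (e y1 y) (e y2 y))"
        by (simp add: ac_simps)
      also have "\<dots> \<le> inf (wayb_comp P e x y) (inf (e y1 y) (e y2 y))"
        using wayb_comp_ge[OF \<open>z \<in> P\<close> \<open>y \<in> P\<close>] by (rule inf_mono) simp
      also have "\<dots> \<le> (SUP y\<in>P. inf (wayb_comp P e x y) (inf (e y1 y) (e y2 y)))"
        using \<open>y \<in> P\<close> by (rule SUP_upper)
      finally show "inf (?w x z) (inf (?w z y) (inf (e y1 y) (e y2 y)))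
          \<le> (SUP y\<in>P. inf (wayb_comp P e x y) (inf (e y1 y) (e y2 y)))" .
    qed
    finally show "inf (?w x z) (inf (?w z y1) (?w z y2))
        \<le> (SUP y\<in>P. inf (wayb_comp P e x y) (inf (e y1 y) (e y2 y)))" .
  qed
  finally show ?thesis .
qed

lemma Lideal_wayb_comp:
  assumes "x \<in> P"
  shows "Lideal P e (wayb_comp P e x)"
proof -
  have "(SUP y\<in>P. wayb_comp P e x y) = (SUP z\<in>P. inf (wayb P e x z) (SUP y\<in>P. wayb P e z y))"
    by (simp add: wayb_comp_def inf_SUP_frame cong: SUP_cong) (rule SUP_commute)
  also have "\<dots> = top"
    using Ldirected_SUP_eq_top[OF Ldirected_wayb] Ldirected_SUP_eq_top[OF Ldirected_wayb[OF assms]]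
    by (simp cong: SUP_cong)
  finally have "Ldirected P e (wayb_comp P e x)"
    using wayb_comp_inf_le[OF assms] by (simp add: Ldirected_def)
  moreover have "inf (wayb_comp P e x y) (e y' y) \<le> wayb_comp P e x y'" if "y \<in> P" "y' \<in> P" for y y'
  proof -
    have "inf (inf (wayb P e x z) (wayb P e z y)) (e y' y) \<le> wayb_comp P e x y'" if "z \<in> P" for z
    proof -
      have "inf (inf (wayb P e x z) (wayb P e z y)) (e y' y) \<le> inf (wayb P e x z) (wayb P e z y')"
        by (subst inf_assoc) (rule inf_mono[OF order_refl wayb_lower[OF \<open>y \<in> P\<close> \<open>y' \<in> P\<close>]])
      also have "\<dots> \<le> wayb_comp P e x y'" using that \<open>y' \<in> P\<close> by (rule wayb_comp_ge)
      finally show ?thesis .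
    qed
    then show ?thesis using \<open>y \<in> P\<close> by (simp add: wayb_comp_def SUP_inf_leI)
  qed
  ultimately show ?thesis by (simp add: Lideal_def Llower_def Lsubset_def wayb_comp_def)
qed

lemma is_Lsup_wayb_comp:
  assumes "x \<in> P"
  shows "is_Lsup P e (wayb_comp P e x) x"
proof (rule is_LsupI[OF assms])
  fix z y assume "z \<in> P" "y \<in> P"
  have "inf (e x y) (inf (wayb P e x v) (wayb P e v z)) \<le> e z y" if "v \<in> P" for v
  proof -
    have "inf (e x y) (inf (wayb P e x v) (wayb P e v z)) \<le> inf (inf (e z v) (e v x)) (e x y)"
      using wayb_le[OF Lorder_cont assms that] wayb_le[OF Lorder_cont that \<open>z \<in> P\<close>]
      by (simp add: le_infI1 le_infI2)
    also have "\<dots> \<le> inf (e z x) (e x y)"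
      using Lorder_trans[OF Lorder_cont \<open>z \<in> P\<close> that assms] by (rule inf_mono) simp
    also have "\<dots> \<le> e z y" using Lorder_trans[OF Lorder_cont \<open>z \<in> P\<close> assms \<open>y \<in> P\<close>] .
    finally show ?thesis .
  qed
  then show "inf (e x y) (wayb_comp P e x z) \<le> e z y"
    using \<open>z \<in> P\<close> by (simp add: wayb_comp_def inf_SUP_leI)
next
  fix y assume "y \<in> P"
  let ?T = "Lsub P (wayb_comp P e x) (ldown P e y)"
  have "inf ?T (wayb P e x z) \<le> e z y" if "z \<in> P" for z
  proof -
    have "inf (inf ?T (wayb P e x z)) (wayb P e z v) \<le> ldown P e y v" if "v \<in> P" for v
    proof -
      have "inf (inf ?T (wayb P e x z)) (wayb P e z v) \<le> inf ?T (wayb_comp P e x v)"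
        using wayb_comp_ge[OF \<open>z \<in> P\<close> that, of x] by (simp add: inf_assoc le_infI2)
      also have "\<dots> \<le> ldown P e y v" using that by (rule Lsub_inf_le)
      finally show ?thesis .
    qed
    then have "inf ?T (wayb P e x z) \<le> Lsub P (wayb P e z) (ldown P e y)"
      by (simp add: le_Lsub_iff)
    then show ?thesis using is_Lsup_eq[OF is_Lsup_wayb[OF that] \<open>y \<in> P\<close>] by simp
  qed
  then have "?T \<le> Lsub P (wayb P e x) (ldown P e y)" by (simp add: le_Lsub_iff ldown_def)
  then show "?T \<le> e x y" using is_Lsup_eq[OF is_Lsup_wayb[OF assms] \<open>y \<in> P\<close>] by simp
qed

lemma wayb_interpolation:
  assumes "x \<in> P" "y \<in> P"
  shows "wayb P e x y \<le> (SUP z\<in>P. inf (wayb P e x z) (wayb P e z y))"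
  using wayb_le_Lideal[OF Lideal_wayb_comp[OF assms(1)] is_Lsup_wayb_comp[OF assms(1)] assms(2), of x]
  by (simp add: Lorder_refl[OF Lorder_cont assms(1)] wayb_comp_def assms(2))

lemma wayup_scott:
  assumes "y \<in> P"
  shows "wayup P e y \<in> scott P e"
proof (rule scottI)
  show "Lsubset P (wayup P e y)" by (simp add: Lsubset_def wayup_def)
  show "Lupper P e (wayup P e y)"
    using wayb_upper[OF Lorder_cont _ assms] by (simp add: Lupper_def wayup_def)
  fix D s assume D: "Ldirected P e D" "is_Lsup P e D s"
  have "s \<in> P" using D(2) by (rule is_Lsup_mem)
  have "inf (wayb P e s z) (wayb P e z y) \<le> (SUP x\<in>P. inf (wayb P e x y) (D x))" if "z \<in> P" for z
  proof -
    have "inf (wayb P e s z) (wayb P e z y) \<le> inf (SUP x\<in>P. inf (D x) (e z x)) (wayb P e z y)"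
      using wayb_le_lower_closure[OF Lorder_cont D that] that
      by (intro inf_mono order_refl) (simp add: lower_closure_def)
    also have "\<dots> \<le> (SUP x\<in>P. inf (wayb P e x y) (D x))"
    proof (rule SUP_inf_leI)
      fix x assume "x \<in> P"
      have "inf (inf (D x) (e z x)) (wayb P e z y) \<le> inf (wayb P e x y) (D x)"
        by (intro le_infI order_trans[OF _ wayb_upper[OF Lorder_cont that assms \<open>x \<in> P\<close>]])
          (simp_all add: le_infI1 le_infI2)
      then show "inf (inf (D x) (e z x)) (wayb P e z y) \<le> (SUP x\<in>P. inf (wayb P e x y) (D x))"
        using \<open>x \<in> P\<close> by (blast intro: SUP_upper2)
    qed
    finally show ?thesis .
  qed
  then have "wayb P e s y \<le> (SUP x\<in>P. inf (wayb P e x y) (D x))"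
    by (rule order_trans[OF wayb_interpolation[OF \<open>s \<in> P\<close> assms] SUP_least])
  moreover have "inf (wayb P e x y) (D x) \<le> wayb P e s y" if "x \<in> P" for x
    by (rule order_trans[OF inf_mono[OF order_refl is_Lsup_upper[OF Lorder_cont D(2) that]]
          wayb_upper[OF Lorder_cont that assms \<open>s \<in> P\<close>]])
  ultimately show "wayup P e y s = (SUP x\<in>P. inf (wayup P e y x) (D x))"
    using \<open>s \<in> P\<close> by (simp add: wayup_def antisym SUP_least cong: SUP_cong)
qed

lemma scott_eq_Sup_wayup:
  assumes A: "A \<in> scott P e"
  shows "A = Sup ((\<lambda>y. inf (lconst P (A y)) (wayup P e y)) ` P)"
proof
  fix x
  show "A x = Sup ((\<lambda>y. inf (lconst P (A y)) (wayup P e y)) ` P) x"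
  proof (cases "x \<in> P")
    case True
    have "A x = (SUP y\<in>P. inf (A y) (wayb P e x y))"
      using scott_eq_SUP[OF A _ Ldirected_wayb[OF True] is_Lsup_wayb[OF True]]
      by (simp add: Lsubset_def wayb_def)
    then show ?thesis
      using True unfolding SUP_apply by (simp add: lconst_def wayup_def cong: SUP_cong)
  qed (unfold SUP_apply, simp add: scott_eq_bot[OF A] lconst_def wayup_def)
qed

lemma pts_eq_SUP_wayup:
  assumes p: "p \<in> pts P e" and A: "A \<in> scott P e"
  shows "p A = (SUP y\<in>P. inf (A y) (p (wayup P e y)))"
proof -
  have scott: "inf (lconst P (A y)) (wayup P e y) \<in> scott P e" if "y \<in> P" for y
    using that by (intro scott_inf lconst_scott wayup_scott)
  have "p A = p (Sup ((\<lambda>y. inf (lconst P (A y)) (wayup P e y)) ` P))"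
    using scott_eq_Sup_wayup[OF A] by simp
  also have "\<dots> = (SUP y\<in>P. p (inf (lconst P (A y)) (wayup P e y)))"
    using scott by (subst pts_Sup[OF p]) (auto simp: image_image)
  also have "\<dots> = (SUP y\<in>P. inf (A y) (p (wayup P e y)))"
    using pts_inf[OF p lconst_scott wayup_scott] by (simp add: pts_lconst[OF p] cong: SUP_cong)
  finally show ?thesis .
qed

lemma Ldirected_pt_wayup:
  assumes p: "p \<in> pts P e"
  shows "Ldirected P e (\<lambda>y. p (wayup P e y))"
  unfolding Ldirected_def
proof (intro conjI ballI)
  have "top = p (lconst P top)" using pts_lconst[OF p] by simp
  also have "\<dots> = (SUP y\<in>P. p (wayup P e y))"
    using pts_eq_SUP_wayup[OF p lconst_scott] by (simp add: lconst_def cong: SUP_cong)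
  finally show "(SUP y\<in>P. p (wayup P e y)) = top" by simp
next
  fix x y assume "x \<in> P" "y \<in> P"
  have "inf (p (wayup P e x)) (p (wayup P e y)) = p (inf (wayup P e x) (wayup P e y))"
    using pts_inf[OF p wayup_scott[OF \<open>x \<in> P\<close>] wayup_scott[OF \<open>y \<in> P\<close>]] by simp
  also have "\<dots> = (SUP z\<in>P. inf (inf (wayb P e z x) (wayb P e z y)) (p (wayup P e z)))"
    using pts_eq_SUP_wayup[OF p scott_inf[OF wayup_scott[OF \<open>x \<in> P\<close>] wayup_scott[OF \<open>y \<in> P\<close>]]]
    by (simp add: wayup_def cong: SUP_cong)
  also have "\<dots> \<le> (SUP z\<in>P. inf (p (wayup P e z)) (inf (e x z) (e y z)))"
  proof (rule SUP_subset_mono[OF order_refl])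
    fix z assume "z \<in> P"
    then have "wayb P e z x \<le> e x z" "wayb P e z y \<le> e y z"
      using \<open>x \<in> P\<close> \<open>y \<in> P\<close> by (simp_all add: wayb_le[OF Lorder_cont])
    then show "inf (inf (wayb P e z x) (wayb P e z y)) (p (wayup P e z))
        \<le> inf (p (wayup P e z)) (inf (e x z) (e y z))"
      by (simp add: le_infI1 le_infI2)
  qed
  finally show "inf (p (wayup P e x)) (p (wayup P e y))
      \<le> (SUP z\<in>P. inf (p (wayup P e z)) (inf (e x z) (e y z)))" .
qed

lemma pt_wayup_le_pt_order_point_of:
  assumes "q \<in> pts P e" and "y \<in> P"
  shows "q (wayup P e y) \<le> pt_order P e (point_of P e y) q"
proof -
  have "inf (q (wayup P e y)) (B y) \<le> q B" if "B \<in> scott P e" for B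
    using pts_eq_SUP_wayup[OF assms(1) that] assms(2) by (auto simp: inf_commute intro: SUP_upper2)
  then show ?thesis by (simp add: le_pt_order_iff point_of_def)
qed

lemma Ldirected_pt_approx: "p \<in> pts P e \<Longrightarrow> Ldirected (pts P e) (pt_order P e) (pt_approx P e p)"
  unfolding pt_approx_def by (rule Ldirected_Limage_point_of[OF Ldirected_pt_wayup])

lemma pt_join_pt_approx:
  assumes p: "p \<in> pts P e"
  shows "pt_join P e (pt_approx P e p) = p"
proof
  fix A
  show "pt_join P e (pt_approx P e p) A = p A"
  proof (cases "A \<in> scott P e")
    case True
    then show ?thesis
      by (simp add: pt_approx_def pt_join_Limage_point_of pts_eq_SUP_wayup[OF p True] inf_commute)
  qed (simp add: pt_join_def pts_eq_bot[OF p])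
qed

lemma is_Lsup_pt_approx: "p \<in> pts P e \<Longrightarrow> is_Lsup (pts P e) (pt_order P e) (pt_approx P e p) p"
  using is_Lsup_pt_join[OF Ldirected_pt_approx] pt_join_pt_approx by simp

lemma pt_approx_le_wayb:
  assumes p: "p \<in> pts P e" and q: "q \<in> pts P e"
  shows "pt_approx P e p q \<le> wayb (pts P e) (pt_order P e) p q"
  unfolding pt_approx_def Limage_def
proof (rule SUP_least)
  fix x assume "x \<in> {x \<in> P. point_of P e x = q}"
  then have "x \<in> P" and qx: "q = point_of P e x" by auto
  show "p (wayup P e x) \<le> wayb (pts P e) (pt_order P e) p q"
  proof (rule wayb_geI[OF q])
    fix J s assume J: "Lideal (pts P e) (pt_order P e) J" and S: "is_Lsup (pts P e) (pt_order P e) J s"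
    then have s: "s = pt_join P e J" by (simp add: Lideal_def is_Lsup_pts_imp_eq_pt_join)
    have "inf (p (wayup P e x)) (pt_order P e p s) \<le> s (wayup P e x)"
      using pt_order_inf_le[OF wayup_scott[OF \<open>x \<in> P\<close>], of p s] by (simp add: inf_commute)
    also have "\<dots> = (SUP r\<in>pts P e. inf (J r) (r (wayup P e x)))"
      using s wayup_scott[OF \<open>x \<in> P\<close>] by (simp add: pt_join_def)
    also have "\<dots> \<le> J q"
    proof (rule SUP_least)
      fix r assume "r \<in> pts P e"
      have "inf (J r) (r (wayup P e x)) \<le> inf (J r) (pt_order P e q r)"
        using pt_wayup_le_pt_order_point_of[OF \<open>r \<in> pts P e\<close> \<open>x \<in> P\<close>] qx
        by (intro inf_mono order_refl) simp
      also have "\<dots> \<le> J q" using J \<open>r \<in> pts P e\<close> q by (rule Lideal_Llower)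
      finally show "inf (J r) (r (wayup P e x)) \<le> J q" .
    qed
    finally show "inf (p (wayup P e x)) (pt_order P e p s) \<le> J q" .
  qed
qed

lemma cont_Lordered_pts: "cont_Lordered (pts P e) (pt_order P e)"
  unfolding cont_Lordered_def
proof (intro conjI ballI Lorder_pt_order)
  fix p assume p: "p \<in> pts P e"
  show "Ldirected (pts P e) (pt_order P e) (wayb (pts P e) (pt_order P e) p)"
    using Lorder_pt_order Ldirected_pt_approx[OF p] pt_approx_le_wayb[OF p]
      wayb_le_lower_closure[OF Lorder_pt_order Ldirected_pt_approx[OF p] is_Lsup_pt_approx[OF p]]
    by (rule Ldirected_if_between)
  show "is_Lsup (pts P e) (pt_order P e) (wayb (pts P e) (pt_order P e) p) p"
    by (rule is_Lsup_if_between[OF Lorder_pt_order is_Lsup_pt_approx[OF p] pt_approx_le_wayb[OF p]])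
      (simp_all add: wayb_le[OF Lorder_pt_order p])
qed

lemma scott_pts_eq_phi:
  assumes U: "U \<in> scott (pts P e) (pt_order P e)"
  shows "U = phi P e (\<lambda>x. if x \<in> P then U (point_of P e x) else bot)"
    (is "U = phi P e ?A")
proof
  fix p
  show "U p = phi P e ?A p"
  proof (cases "p \<in> pts P e")
    case True
    have "U p = (SUP q\<in>pts P e. inf (U q) (pt_approx P e p q))"
      using scott_eq_SUP[OF U _ Ldirected_pt_approx[OF True] is_Lsup_pt_approx[OF True]]
      by (simp add: pt_approx_def Lsubset_Limage[OF point_of_image])
    also have "\<dots> = (SUP y\<in>P. inf (?A y) (p (wayup P e y)))"
      using SUP_Limage_inf[OF point_of_image, where D="\<lambda>y. p (wayup P e y)" and G=U]
      by (simp add: pt_approx_def inf_commute cong: SUP_cong)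
    also have "\<dots> = p ?A" using pts_eq_SUP_wayup[OF True scott_pts_comp_point_of[OF U]] by simp
    finally show ?thesis using True by (simp add: phi_def)
  qed (simp add: phi_def scott_eq_bot[OF U])
qed

lemma scott_pts_eq_spectral: "scott (pts P e) (pt_order P e) = spectral P e"
proof
  show "scott (pts P e) (pt_order P e) \<subseteq> spectral P e"
    using scott_pts_eq_phi scott_pts_comp_point_of unfolding spectral_def by blast
  show "spectral P e \<subseteq> scott (pts P e) (pt_order P e)"
    unfolding spectral_def using phi_scott by blast
qed

end

end

theorem proposition6p3:
  fixes P :: "'a set" and e :: "'a \<Rightarrow> 'a \<Rightarrow> 'l::complete_lattice"
  assumes "frame TYPE('l)"
    and "cont_Lordered P e"
  shows "cont_Ldcpo (pts P e) (pt_order P e)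
         \<and> scott (pts P e) (pt_order P e) = spectral P e"
  using cont_Lordered_pts[OF assms] Ldcpo_pts[OF assms(1)] scott_pts_eq_spectral[OF assms]
  by (simp add: cont_Ldcpo_def)

end
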